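(* Let $H$ be a graph and $(G,\sigma)$ a signed graph. Then $\tilde H$ is a topological minor of $(G,\sigma)$ if and only if $\tilde H$ is a total topological minor of $(G,\sigma)$.
   Context: A signed graph $(G,\sigma)$ is a graph (loops and parallel edges allowed) with a signature $\sigma:E(G)\to\{+,-\}$; the sign of a path or cycle is the product of the signs of its edges. For a graph $H$, $\tilde H$ is the signed graph obtained by replacing each edge of $H$ by two parallel edges, one positive and one negative. A signed graph $(H,\pi)$ is a topological minor of $(G,\sigma)$ if (i) some subdivision of $H$ is isomorphic to a subgraph $G_1$ of $G$, and (ii) for every cycle $C$ of $(H,\pi)$, the image of $C$ in $G_1$ has in $(G,\sigma)$ the same sign as $C$ has in $(H,\pi)$. It is a total topological minor if (i) holds and (ii') for every edge $e$ of $H$, the path $P_e$ representing $e$ in $G_1$ has sign $\pi(e)$ in $(G,\sigma)$. *)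

theory Defs
  imports Main
begin

text \<open>A (finite) graph with loops and parallel edges: vertex set V, edge set E,
 and an endpoint map assigning each edge its set of one (loop) or two endpoints.\<close>
definition mgraph :: "'v set \<Rightarrow> 'e set \<Rightarrow> ('e \<Rightarrow> 'v set) \<Rightarrow> bool" where
  "mgraph V E ends \<longleftrightarrow> finite V \<and> finite E \<and>
     (\<forall>e\<in>E. ends e \<subseteq> V \<and> 1 \<le> card (ends e) \<and> card (ends e) \<le> 2)"

definition signature :: "'e set \<Rightarrow> ('e \<Rightarrow> int) \<Rightarrow> bool" where
  "signature E \<sigma> \<longleftrightarrow> (\<forall>e\<in>E. \<sigma> e = 1 \<or> \<sigma> e = -1)"

text \<open>A cycle of a graph: vertex list vs and edge list es of the same length n \<ge> 1,
 no repeated vertices or edges, edge i joining vs!i and vs!((i+1) mod n).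
 (n = 1: a loop; n = 2: two parallel edges.)\<close>
definition is_cycle :: "'v set \<Rightarrow> 'e set \<Rightarrow> ('e \<Rightarrow> 'v set) \<Rightarrow> 'v list \<Rightarrow> 'e list \<Rightarrow> bool" where
  "is_cycle V E ends vs es \<longleftrightarrow> length vs = length es \<and> es \<noteq> [] \<and>
     distinct vs \<and> distinct es \<and> set vs \<subseteq> V \<and>
     (\<forall>i<length es. es!i \<in> E \<and> ends (es!i) = {vs!i, vs!((i+1) mod length es)})"

definition is_walk :: "'v set \<Rightarrow> 'e set \<Rightarrow> ('e \<Rightarrow> 'v set) \<Rightarrow> 'v list \<Rightarrow> 'e list \<Rightarrow> bool" where
  "is_walk V E ends vs es \<longleftrightarrow> length vs = length es + 1 \<and> es \<noteq> [] \<and>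
     distinct es \<and> set vs \<subseteq> V \<and>
     (\<forall>i<length es. es!i \<in> E \<and> ends (es!i) = {vs!i, vs!(i+1)})"

definition internal :: "'v list \<Rightarrow> 'v set" where
  "internal vs = set (tl (butlast vs))"

text \<open>An embedding of a subdivision of H = (VH,EH,endsH) into G = (VG,EG,endsG):
 branch vertices \<phi> (injective), and for every edge e of H a path P e = (vs, es) of G
 representing e (a path between the images of the two ends of e, or a cycle through
 the image of the end of e if e is a loop); the paths are internally disjoint from each
 other and from the branch vertices, and pairwise edge-disjoint. The union of the
 branch vertices and the paths is the subgraph G1 isomorphic to a subdivision of H.\<close>
definition subdiv_embedding ::
  "'a set \<Rightarrow> 'b set \<Rightarrow> ('b \<Rightarrow> 'a set) \<Rightarrow> 'v set \<Rightarrow> 'e set \<Rightarrow> ('e \<Rightarrow> 'v set)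
     \<Rightarrow> ('a \<Rightarrow> 'v) \<Rightarrow> ('b \<Rightarrow> 'v list \<times> 'e list) \<Rightarrow> bool" where
  "subdiv_embedding VH EH endsH VG EG endsG \<phi> P \<longleftrightarrow>
     inj_on \<phi> VH \<and> \<phi> ` VH \<subseteq> VG \<and>
     (\<forall>e\<in>EH. let vs = fst (P e); es = snd (P e) in
        is_walk VG EG endsG vs es \<and>
        {hd vs, last vs} = \<phi> ` endsH e \<and>
        (if card (endsH e) = 2 then distinct vs else hd vs = last vs \<and> distinct (tl vs)) \<and>
        internal vs \<inter> \<phi> ` VH = {}) \<and>
     (\<forall>e\<in>EH. \<forall>e'\<in>EH. e \<noteq> e' \<longrightarrow>
        internal (fst (P e)) \<inter> set (fst (P e')) = {} \<and>
        set (snd (P e)) \<inter> set (snd (P e')) = {})"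

definition sign_of :: "('e \<Rightarrow> int) \<Rightarrow> 'e set \<Rightarrow> int" where
  "sign_of \<sigma> F = (\<Prod>e\<in>F. \<sigma> e)"

definition top_minor ::
  "'a set \<Rightarrow> 'b set \<Rightarrow> ('b \<Rightarrow> 'a set) \<Rightarrow> ('b \<Rightarrow> int) \<Rightarrow>
   'v set \<Rightarrow> 'e set \<Rightarrow> ('e \<Rightarrow> 'v set) \<Rightarrow> ('e \<Rightarrow> int) \<Rightarrow> bool" where
  "top_minor VH EH endsH \<pi> VG EG endsG \<sigma> \<longleftrightarrow>
     (\<exists>\<phi> P. subdiv_embedding VH EH endsH VG EG endsG \<phi> P \<and>
        (\<forall>vs es. is_cycle VH EH endsH vs es \<longrightarrow>
           sign_of \<sigma> (\<Union>e\<in>set es. set (snd (P e))) = sign_of \<pi> (set es)))"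

definition total_top_minor ::
  "'a set \<Rightarrow> 'b set \<Rightarrow> ('b \<Rightarrow> 'a set) \<Rightarrow> ('b \<Rightarrow> int) \<Rightarrow>
   'v set \<Rightarrow> 'e set \<Rightarrow> ('e \<Rightarrow> 'v set) \<Rightarrow> ('e \<Rightarrow> int) \<Rightarrow> bool" where
  "total_top_minor VH EH endsH \<pi> VG EG endsG \<sigma> \<longleftrightarrow>
     (\<exists>\<phi> P. subdiv_embedding VH EH endsH VG EG endsG \<phi> P \<and>
        (\<forall>e\<in>EH. sign_of \<sigma> (set (snd (P e))) = \<pi> e))"

text \<open>H-tilde: each edge e of H replaced by the two parallel edges (e,True) (positive)
 and (e,False) (negative).\<close>
definition tilde_edges :: "'b set \<Rightarrow> ('b \<times> bool) set" where
  "tilde_edges E = E \<times> UNIV"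

definition tilde_ends :: "('b \<Rightarrow> 'a set) \<Rightarrow> ('b \<times> bool) \<Rightarrow> 'a set" where
  "tilde_ends ends = (\<lambda>(e, s). ends e)"

definition tilde_sig :: "('b \<times> bool) \<Rightarrow> int" where
  "tilde_sig = (\<lambda>(e, s). if s then 1 else -1)"

end

theory Submission
  imports Defs
begin

text \<open>A total topological minor is a topological minor because the image of a cycle is the
 edge-disjoint union of the paths representing its edges, so its sign is the product of their
 signs. Conversely, let \<open>\<tilde>H\<close> be a topological minor. For an edge \<open>e\<close> of \<open>H\<close> with two
 ends, its copies \<open>e\<^sup>+\<close>, \<open>e\<^sup>-\<close> form a negative cycle of length 2 in \<open>\<tilde>H\<close>; if \<open>e\<close> is a
 loop, they are a positive and a negative cycle of length 1. Either way the paths representing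
 \<open>e\<^sup>+\<close> and \<open>e\<^sup>-\<close> have opposite signs, so exchanging the two paths wherever the one
 for \<open>e\<^sup>+\<close> is negative gives an embedding in which every path has the sign of its edge.\<close>

lemma sign_of_cases:
  assumes "signature E \<sigma>" "finite F" "F \<subseteq> E"
  shows "sign_of \<sigma> F = 1 \<or> sign_of \<sigma> F = -1"
  using assms(2,3)
proof (induction F rule: finite_induct)
  case empty
  then show ?case by (simp add: sign_of_def)
next
  case (insert x F)
  then have "\<sigma> x = 1 \<or> \<sigma> x = -1" using assms(1) by (auto simp: signature_def)
  with insert show ?case by (auto simp: sign_of_def)
qed

lemma sign_of_UN_disjoint:
  assumes "finite I" "\<forall>i\<in>I. finite (A i)" "\<forall>i\<in>I. \<forall>j\<in>I. i \<noteq> j \<longrightarrow> A i \<inter> A j = {}"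
  shows "sign_of \<sigma> (\<Union>i\<in>I. A i) = (\<Prod>i\<in>I. sign_of \<sigma> (A i))"
  unfolding sign_of_def using prod.UNION_disjoint[OF assms] .

lemma is_cycle_edges_subset:
  assumes "is_cycle V E ends vs es"
  shows "set es \<subseteq> E"
  using assms unfolding is_cycle_def by (metis in_set_conv_nth subsetI)

lemma subdiv_embedding_path_edges_subset:
  assumes "subdiv_embedding VH EH endsH VG EG endsG \<phi> P" "e \<in> EH"
  shows "set (snd (P e)) \<subseteq> EG"
proof -
  have "is_walk VG EG endsG (fst (P e)) (snd (P e))"
    using assms unfolding subdiv_embedding_def by (auto simp: Let_def)
  then show ?thesis unfolding is_walk_def by (auto simp: in_set_conv_nth)
qed

lemma subdiv_embedding_edge_disjoint:
  assumes "subdiv_embedding VH EH endsH VG EG endsG \<phi> P" "e \<in> EH" "e' \<in> EH" "e \<noteq> e'"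
  shows "set (snd (P e)) \<inter> set (snd (P e')) = {}"
  using assms unfolding subdiv_embedding_def by blast

lemma subdiv_embedding_reindex:
  assumes emb: "subdiv_embedding VH EH endsH VG EG endsG \<phi> P"
    and g: "bij_betw g EH EH" and ends_g: "\<forall>e\<in>EH. endsH (g e) = endsH e"
  shows "subdiv_embedding VH EH endsH VG EG endsG \<phi> (P \<circ> g)"
proof -
  have g_in: "g e \<in> EH" if "e \<in> EH" for e
    using g that by (auto simp: bij_betw_def)
  have g_inj: "g e \<noteq> g e'" if "e \<in> EH" "e' \<in> EH" "e \<noteq> e'" for e e'
    using g that by (auto simp: bij_betw_def inj_on_def)
  have paths: "let vs = fst ((P \<circ> g) e); es = snd ((P \<circ> g) e) in
        is_walk VG EG endsG vs es \<and> {hd vs, last vs} = \<phi> ` endsH e \<and>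
        (if card (endsH e) = 2 then distinct vs else hd vs = last vs \<and> distinct (tl vs)) \<and>
        internal vs \<inter> \<phi> ` VH = {}" if "e \<in> EH" for e
    using emb g_in[OF that] ends_g that unfolding subdiv_embedding_def by (auto simp: Let_def)
  have disjoint: "internal (fst ((P \<circ> g) e)) \<inter> set (fst ((P \<circ> g) e')) = {} \<and>
        set (snd ((P \<circ> g) e)) \<inter> set (snd ((P \<circ> g) e')) = {}"
    if "e \<in> EH" "e' \<in> EH" "e \<noteq> e'" for e e'
    using emb g_in[OF that(1)] g_in[OF that(2)] g_inj[OF that]
    unfolding subdiv_embedding_def by simp
  show ?thesis
    unfolding subdiv_embedding_def
  proof (intro conjI ballI impI)
    show "inj_on \<phi> VH" "\<phi> ` VH \<subseteq> VG"
      using emb by (simp_all add: subdiv_embedding_def)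
  qed (use paths disjoint in auto)
qed

lemma total_top_minor_imp_top_minor:
  assumes "total_top_minor VH EH endsH \<pi> VG EG endsG \<sigma>"
  shows "top_minor VH EH endsH \<pi> VG EG endsG \<sigma>"
proof -
  obtain \<phi> P where emb: "subdiv_embedding VH EH endsH VG EG endsG \<phi> P"
    and path_sign: "\<forall>e\<in>EH. sign_of \<sigma> (set (snd (P e))) = \<pi> e"
    using assms unfolding total_top_minor_def by blast
  have "sign_of \<sigma> (\<Union>e\<in>set es. set (snd (P e))) = sign_of \<pi> (set es)"
    if "is_cycle VH EH endsH vs es" for vs es
  proof -
    have es: "set es \<subseteq> EH" using is_cycle_edges_subset[OF that] .
    have "sign_of \<sigma> (\<Union>e\<in>set es. set (snd (P e))) = (\<Prod>e\<in>set es. sign_of \<sigma> (set (snd (P e))))"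
      using es subdiv_embedding_edge_disjoint[OF emb] by (intro sign_of_UN_disjoint) blast+
    also have "\<dots> = (\<Prod>e\<in>set es. \<pi> e)"
      using es path_sign by (intro prod.cong) auto
    finally show ?thesis by (simp add: sign_of_def)
  qed
  with emb show ?thesis unfolding top_minor_def by blast
qed

lemma is_cycle_tilde_loop:
  assumes "e \<in> EH" "endsH e = {v}" "v \<in> VH"
  shows "is_cycle VH (tilde_edges EH) (tilde_ends endsH) [v] [(e, s)]"
  using assms unfolding is_cycle_def by (simp add: tilde_edges_def tilde_ends_def)

lemma is_cycle_tilde_digon:
  assumes "e \<in> EH" "endsH e = {u, w}" "u \<noteq> w" "u \<in> VH" "w \<in> VH"
  shows "is_cycle VH (tilde_edges EH) (tilde_ends endsH) [u, w] [(e, True), (e, False)]"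
  using assms unfolding is_cycle_def
  by (auto simp: tilde_edges_def tilde_ends_def less_Suc_eq insert_commute)

lemma top_minor_tilde_path_signs:
  assumes H: "mgraph VH EH endsH"
    and emb: "subdiv_embedding VH (tilde_edges EH) (tilde_ends endsH) VG EG endsG \<phi> P"
    and cycle_sign: "\<And>vs es. is_cycle VH (tilde_edges EH) (tilde_ends endsH) vs es \<Longrightarrow>
           sign_of \<sigma> (\<Union>e\<in>set es. set (snd (P e))) = sign_of tilde_sig (set es)"
    and e: "e \<in> EH"
  shows "sign_of \<sigma> (set (snd (P (e, True)))) * sign_of \<sigma> (set (snd (P (e, False)))) = -1"
proof -
  have ends: "endsH e \<subseteq> VH" "card (endsH e) = 1 \<or> card (endsH e) = 2"
    using H e unfolding mgraph_def by auto
  then consider v where "endsH e = {v}" | u w where "endsH e = {u, w}" "u \<noteq> w"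
    by (metis card_1_singletonE card_2_iff)
  then show ?thesis
  proof cases
    case (1 v)
    have "sign_of \<sigma> (set (snd (P (e, s)))) = tilde_sig (e, s)" for s
      using cycle_sign[OF is_cycle_tilde_loop[of e EH endsH v VH, OF e 1]] ends 1 by (simp add: sign_of_def)
    then show ?thesis by (simp add: tilde_sig_def)
  next
    case (2 u w)
    have "sign_of \<sigma> (set (snd (P (e, True))) \<union> set (snd (P (e, False)))) = -1"
      using cycle_sign[OF is_cycle_tilde_digon[of e EH endsH u w VH, OF e 2]] ends 2
      by (simp add: sign_of_def tilde_sig_def)
    moreover have "set (snd (P (e, True))) \<inter> set (snd (P (e, False))) = {}"
      using subdiv_embedding_edge_disjoint[OF emb] e by (simp add: tilde_edges_def)
    ultimately show ?thesis
      unfolding sign_of_def by (simp add: prod.union_disjoint)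
  qed
qed

lemma top_minor_tilde_imp_total_top_minor:
  assumes H: "mgraph VH EH endsH" and \<sigma>: "signature EG \<sigma>"
    and "top_minor VH (tilde_edges EH) (tilde_ends endsH) tilde_sig VG EG endsG \<sigma>"
  shows "total_top_minor VH (tilde_edges EH) (tilde_ends endsH) tilde_sig VG EG endsG \<sigma>"
proof -
  obtain \<phi> P where emb: "subdiv_embedding VH (tilde_edges EH) (tilde_ends endsH) VG EG endsG \<phi> P"
    and cycle_sign: "\<And>vs es. is_cycle VH (tilde_edges EH) (tilde_ends endsH) vs es \<Longrightarrow>
           sign_of \<sigma> (\<Union>e\<in>set es. set (snd (P e))) = sign_of tilde_sig (set es)"
    using assms(3) unfolding top_minor_def by blast
  define S where "S x = sign_of \<sigma> (set (snd (P x)))" for x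
  have S_cases: "S x = 1 \<or> S x = -1" if "x \<in> tilde_edges EH" for x
    unfolding S_def using subdiv_embedding_path_edges_subset[OF emb that]
    by (intro sign_of_cases[OF \<sigma>]) auto
  have opposite: "S (e, False) = - S (e, True)" if "e \<in> EH" for e
    using top_minor_tilde_path_signs[OF H emb cycle_sign that]
      S_cases[of "(e, True)"] S_cases[of "(e, False)"] that
    by (auto simp: S_def tilde_edges_def)
  define g where "g = (\<lambda>(e, s). (e, if S (e, True) = 1 then s else \<not> s))"
  have g_involution: "g (g x) = x" for x
    by (cases x) (auto simp: g_def)
  have g_bij: "bij_betw g (tilde_edges EH) (tilde_edges EH)"
    by (rule bij_betw_byWitness[where f' = g]) (auto simp: g_involution g_def tilde_edges_def)
  have g_ends: "\<forall>x\<in>tilde_edges EH. tilde_ends endsH (g x) = tilde_ends endsH x"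
    by (auto simp: g_def tilde_ends_def)
  have reindexed_signs: "S (g (e, s)) = tilde_sig (e, s)" if "e \<in> EH" for e s
    using opposite[OF that] S_cases[of "(e, True)"] that
    by (cases s) (auto simp: g_def tilde_sig_def tilde_edges_def)
  show ?thesis
    unfolding total_top_minor_def
  proof (intro exI conjI ballI)
    show "subdiv_embedding VH (tilde_edges EH) (tilde_ends endsH) VG EG endsG \<phi> (P \<circ> g)"
      using emb g_bij g_ends by (rule subdiv_embedding_reindex)
    fix x assume "x \<in> tilde_edges EH"
    then obtain e s where "x = (e, s)" "e \<in> EH" by (auto simp: tilde_edges_def)
    then show "sign_of \<sigma> (set (snd ((P \<circ> g) x))) = tilde_sig x"
      using reindexed_signs by (simp add: S_def)
  qed
qed

theorem mainTheorem4:
  fixes VH :: "'a set" and EH :: "'b set" and endsH :: "'b \<Rightarrow> 'a set"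
    and VG :: "'v set" and EG :: "'e set" and endsG :: "'e \<Rightarrow> 'v set"
    and \<sigma> :: "'e \<Rightarrow> int"
  assumes "mgraph VH EH endsH"
    and "mgraph VG EG endsG"
    and "signature EG \<sigma>"
  shows "top_minor VH (tilde_edges EH) (tilde_ends endsH) tilde_sig VG EG endsG \<sigma>
     \<longleftrightarrow> total_top_minor VH (tilde_edges EH) (tilde_ends endsH) tilde_sig VG EG endsG \<sigma>"
  using top_minor_tilde_imp_total_top_minor[OF assms(1,3)] total_top_minor_imp_top_minor
  by blast

end
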